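(* For every $m\in\mathbb{N}\cup\{0\}$ and $(s,t)\in\mathbb{R}^2\setminus\{(0,0)\}$, $$\partial_s^m\Big(\frac{1}{\sqrt{s^2+t^2}}\Big)=\frac{P_m(s,t)}{(\sqrt{s^2+t^2})^{2m+1}},$$ where the polynomials $P_m$ are given, for $m\in\mathbb{N}\cup\{0\}$, by $$P_{2m}(s,t)=\sum_{i=0}^m a_{2m,2i}s^{2i}t^{2(m-i)},\qquad P_{2m+1}(s,t)=\sum_{i=0}^m a_{2m+1,2i+1}s^{2i+1}t^{2(m-i)},$$ with, for $0\le i\le m$, $$a_{2m,2i}=(-1)^{m-i}2^{2i-2m}(2m)!\,C_{2m}^{m-i}C_{m+i}^{m-i},\qquad a_{2m+1,2i+1}=(-1)^{m-i+1}2^{2i-2m}(2m+1)!\,C_{2m+1}^{m-i}C_{m+i+1}^{m-i}.$$ Moreover, for every $m\in\mathbb{N}=\{1,2,\dots\}$, $$\sum_{i=0}^m\frac{a_{2m,2i}}{C_{2m-1}^{m-i}}=-\frac{2}{2m+1}\sum_{i=0}^m\frac{a_{2m+1,2i+1}}{C_{2m}^{m-i}}=\frac{(2m)!}{2^{2m-1}},$$ $$(m+1)\sum_{i=0}^m\frac{a_{2m,2i}}{C_{2m}^{m-i}}=-\sum_{i=0}^m\frac{a_{2m+1,2i+1}}{C_{2m+1}^{m-i}}=\frac{(2m+2)!}{2^{2m+1}}.$$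
   Context: $C_n^k=\binom{n}{k}$ denotes the binomial coefficient, with the convention $C_0^0=1$. *)

theory Defs
  imports "HOL-Analysis.Analysis"
begin

definition a_even :: "nat \<Rightarrow> nat \<Rightarrow> real" where
  "a_even m i = (-1) ^ (m - i) * (2::real) powi (2 * int i - 2 * int m) * fact (2 * m)
     * real ((2 * m) choose (m - i)) * real ((m + i) choose (m - i))"

definition a_odd :: "nat \<Rightarrow> nat \<Rightarrow> real" where
  "a_odd m i = (-1) ^ (m - i + 1) * (2::real) powi (2 * int i - 2 * int m) * fact (2 * m + 1)
     * real ((2 * m + 1) choose (m - i)) * real ((m + i + 1) choose (m - i))"

definition P_even :: "nat \<Rightarrow> real \<Rightarrow> real \<Rightarrow> real" where
  "P_even m s t = (\<Sum>i = 0..m. a_even m i * s ^ (2 * i) * t ^ (2 * (m - i)))"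

definition P_odd :: "nat \<Rightarrow> real \<Rightarrow> real \<Rightarrow> real" where
  "P_odd m s t = (\<Sum>i = 0..m. a_odd m i * s ^ (2 * i + 1) * t ^ (2 * (m - i)))"

definition P :: "nat \<Rightarrow> real \<Rightarrow> real \<Rightarrow> real" where
  "P n s t = (if even n then P_even (n div 2) s t else P_odd (n div 2) s t)"

end

theory Submission
  imports Defs
begin

(* Write P n s t as the sum over j of c(n,j) s^(n-2j) t^(2j), where
   c(n,j) = (-1)^(n+j) n!^2 / (4^j j!^2 (n-2j)!) for 2j <= n, so that a_{2m,2i} = c(2m,m-i) and
   a_{2m+1,2i+1} = c(2m+1,m-i).  With r = sqrt(s^2+t^2), the derivative of
   P_n / r^(2n+1) is (r^2 dP_n/ds - (2n+1) s P_n) / r^(2n+3), and comparing coefficients shows that the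
   numerator is P_(n+1); induction on n gives the derivative formula.

   For the sums, c(n,j) / C(n,j) = (-1)^n n! C(n-j,j) (-1/4)^j, so they are values at x = -1/4 of the
   Fibonacci polynomials F_n(x) = sum_j C(n-j,j) x^j.  These satisfy F_(n+2) = F_(n+1) + x F_n, whose
   characteristic polynomial has the double root 1/2 at x = -1/4; hence F_n(-1/4) = (n+1)/2^n.  Dividing
   by C(n-1,j) instead of C(n,j) adds, by the absorption identity, the shifted sum x F_(n-2)(x). *)

lemma sum_atMost_half:
  fixes f :: "nat \<Rightarrow> 'a::comm_monoid_add"
  assumes "\<And>j. n < 2 * j \<Longrightarrow> f j = 0"
  shows "(\<Sum>j\<le>n div 2. f j) = (\<Sum>j\<le>n. f j)"
  by (rule sum.mono_neutral_left) (auto intro: assms)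

lemma sum_reflect:
  fixes f :: "nat \<Rightarrow> 'a::comm_monoid_add"
  shows "(\<Sum>i=0..m. f i) = (\<Sum>j\<le>m. f (m - j))"
  using sum.atLeastAtMost_rev[of f 0 m] by (simp add: atLeast0AtMost)

definition deriv_coeff :: "nat \<Rightarrow> nat \<Rightarrow> real" where
  "deriv_coeff n j = (if 2 * j \<le> n
     then (-1) ^ (n + j) * fact n ^ 2 / (4 ^ j * fact j ^ 2 * fact (n - 2 * j)) else 0)"

lemma deriv_coeff_eq_0: "n < 2 * j \<Longrightarrow> deriv_coeff n j = 0"
  by (simp add: deriv_coeff_def)

lemma deriv_coeff_0: "deriv_coeff n 0 = (-1) ^ n * fact n"
  by (simp add: deriv_coeff_def power2_eq_square)

lemma deriv_coeff_Suc_Suc: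
  "deriv_coeff (Suc n) (Suc j)
     = (real n - 2 * real j) * deriv_coeff n j - (real n + 2 * real j + 3) * deriv_coeff n (Suc j)"
proof -
  consider (interior) k where "n = 2 * j + 2 + k" | (top) "n = 2 * j + 1" | (outside) "n \<le> 2 * j"
  proof (cases "2 * j + 2 \<le> n")
    case True
    then show ?thesis using le_Suc_ex that(1) by blast
  qed (use that in linarith)
  then show ?thesis
  proof cases
    case interior
    define s F J K where "s = (-1::real) ^ (n + j)" and "F = (fact n :: real)"
      and "J = (fact j :: real)" and "K = (fact k :: real)"
    have A: "deriv_coeff (Suc n) (Suc j)
        = s * ((real n + 1) * F)^2 / (4 * 4^j * ((real j + 1) * J)^2 * ((real k + 1) * K))"
      by (simp add: deriv_coeff_def interior s_def F_def J_def K_def algebra_simps)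
    have B: "deriv_coeff n j = s * F^2 / (4^j * J^2 * ((real k + 2) * (real k + 1) * K))"
      by (simp add: deriv_coeff_def interior s_def F_def J_def K_def algebra_simps)
    have C: "deriv_coeff n (Suc j) = - s * F^2 / (4 * 4^j * ((real j + 1) * J)^2 * K)"
      by (simp add: deriv_coeff_def interior s_def F_def J_def K_def algebra_simps)
    have "F \<noteq> 0" "J \<noteq> 0" "K \<noteq> 0"
      "real k + 1 \<noteq> 0" "real k + 2 \<noteq> 0" "real j + 1 \<noteq> 0"
      by (simp_all add: F_def J_def K_def)
    then show ?thesis
      unfolding A B C by (simp add: interior divide_simps) algebra
  next
    case top
    have "(fact (Suc n) :: real) = 2 * (real j + 1) * fact n"
      "(fact (Suc j) :: real) = (real j + 1) * fact j"
      by (simp_all add: top)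
    then show ?thesis
      by (simp add: deriv_coeff_def top divide_simps) algebra
  next
    case outside
    then show ?thesis
      by (simp add: deriv_coeff_def)
  qed
qed

lemma two_powi_eq_inverse_four_power:
  assumes "j \<le> m"
  shows "(2::real) powi (2 * int (m - j) - 2 * int m) = 1 / 4 ^ j"
proof -
  from assms have "2 * int (m - j) - 2 * int m = - int (2 * j)" by simp
  then have "(2::real) powi (2 * int (m - j) - 2 * int m) = inverse (2 ^ (2 * j))"
    by (simp only: power_int_minus power_int_of_nat)
  then show ?thesis
    by (simp add: power_mult divide_inverse)
qed

lemma a_even_eq_deriv_coeff:
  assumes "j \<le> m"
  shows "a_even m (m - j) = deriv_coeff (2 * m) j"
proof -
  have e: "m - (m - j) = j" "m + (m - j) = 2 * m - j" using assms by simp_all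
  have "real ((2 * m) choose j) = fact (2 * m) / (fact j * fact (2 * m - j))"
    "real ((2 * m - j) choose j) = fact (2 * m - j) / (fact j * fact (2 * m - 2 * j))"
    using assms binomial_fact[of j "2 * m - j", where 'a = real]
    by (simp_all add: binomial_fact flip: mult_2)
  then show ?thesis
    using assms unfolding a_even_def deriv_coeff_def e two_powi_eq_inverse_four_power[OF assms]
    by (simp add: power_add power2_eq_square)
qed

lemma a_odd_eq_deriv_coeff:
  assumes "j \<le> m"
  shows "a_odd m (m - j) = deriv_coeff (2 * m + 1) j"
proof -
  have e: "m - (m - j) = j" "m + (m - j) + 1 = 2 * m + 1 - j" using assms by simp_all
  have "real ((2 * m + 1) choose j) = fact (2 * m + 1) / (fact j * fact (2 * m + 1 - j))"
    "real ((2 * m + 1 - j) choose j) = fact (2 * m + 1 - j) / (fact j * fact (2 * m + 1 - 2 * j))"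
    using assms binomial_fact[of j "2 * m + 1 - j", where 'a = real]
    by (simp_all add: binomial_fact flip: mult_2)
  then show ?thesis
    using assms unfolding a_odd_def deriv_coeff_def e two_powi_eq_inverse_four_power[OF assms]
    by (simp add: power_add power2_eq_square)
qed

lemma P_eq_deriv_coeff_sum: "P n s t = (\<Sum>j\<le>n. deriv_coeff n j * s ^ (n - 2 * j) * t ^ (2 * j))"
proof -
  have "P n s t = (\<Sum>j\<le>n div 2. deriv_coeff n j * s ^ (n - 2 * j) * t ^ (2 * j))"
  proof (cases "even n")
    case True
    then obtain m where "n = 2 * m" by blast
    then show ?thesis
      unfolding P_def P_even_def sum_reflect
      by (auto intro!: sum.cong simp: a_even_eq_deriv_coeff diff_mult_distrib2)
  next
    case False
    then obtain m where "n = 2 * m + 1" using oddE by blast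
    then show ?thesis
      unfolding P_def P_odd_def sum_reflect
      by (auto intro!: sum.cong simp: a_odd_eq_deriv_coeff diff_mult_distrib2 Suc_diff_le)
  qed
  also have "\<dots> = (\<Sum>j\<le>n. deriv_coeff n j * s ^ (n - 2 * j) * t ^ (2 * j))"
    by (rule sum_atMost_half) (simp add: deriv_coeff_def)
  finally show ?thesis .
qed

definition P_deriv :: "nat \<Rightarrow> real \<Rightarrow> real \<Rightarrow> real" where
  "P_deriv n s t = (\<Sum>j\<le>n. deriv_coeff n j * (real (n - 2 * j) * s ^ (n - 2 * j - 1)) * t ^ (2 * j))"

lemma P_has_real_derivative: "((\<lambda>x. P n x t) has_real_derivative P_deriv n s t) (at s)"
  unfolding P_eq_deriv_coeff_sum P_deriv_def by (auto intro!: derivative_eq_intros simp: mult_ac)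

lemma deriv_coeff_mult_of_nat_diff:
  "deriv_coeff n j * real (n - 2 * j) = deriv_coeff n j * (real n - 2 * real j)"
  by (cases "2 * j \<le> n") (simp_all add: deriv_coeff_eq_0)

lemma s_mult_P: "s * P n s t = (\<Sum>j\<le>n. deriv_coeff n j * (s ^ (Suc n - 2 * j) * t ^ (2 * j)))"
  unfolding P_eq_deriv_coeff_sum sum_distrib_left
proof (rule sum.cong)
  show "s * (deriv_coeff n j * s ^ (n - 2 * j) * t ^ (2 * j))
      = deriv_coeff n j * (s ^ (Suc n - 2 * j) * t ^ (2 * j))" for j
    by (cases "2 * j \<le> n") (simp_all add: Suc_diff_le deriv_coeff_eq_0)
qed simp

lemma s_squared_mult_P_deriv:
  "s\<^sup>2 * P_deriv n s t
     = (\<Sum>j\<le>n. (real n - 2 * real j) * deriv_coeff n j * (s ^ (Suc n - 2 * j) * t ^ (2 * j)))"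
  unfolding P_deriv_def sum_distrib_left
proof (rule sum.cong)
  fix j
  consider (below) "2 * j < n" | (middle) "2 * j = n" | (above) "n < 2 * j" by linarith
  then show "s\<^sup>2 * (deriv_coeff n j * (real (n - 2 * j) * s ^ (n - 2 * j - 1)) * t ^ (2 * j))
      = (real n - 2 * real j) * deriv_coeff n j * (s ^ (Suc n - 2 * j) * t ^ (2 * j))"
  proof cases
    case below
    then have "Suc n - 2 * j = Suc (Suc (n - 2 * j - 1))" by simp
    with below show ?thesis
      by (simp add: power2_eq_square)
  qed (simp_all add: deriv_coeff_eq_0)
qed simp

lemma t_squared_mult_P_deriv:
  "t\<^sup>2 * P_deriv n s t
     = (\<Sum>j\<le>n. (real n - 2 * real j) * deriv_coeff n j * (s ^ (Suc n - 2 * Suc j) * t ^ (2 * Suc j)))"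
  unfolding P_deriv_def sum_distrib_left
proof (rule sum.cong)
  fix j
  have "t\<^sup>2 * (deriv_coeff n j * (real (n - 2 * j) * s ^ (n - 2 * j - 1)) * t ^ (2 * j))
      = (deriv_coeff n j * real (n - 2 * j)) * (s ^ (n - 2 * j - 1) * (t\<^sup>2 * t ^ (2 * j)))"
    by (simp only: ac_simps)
  then show "t\<^sup>2 * (deriv_coeff n j * (real (n - 2 * j) * s ^ (n - 2 * j - 1)) * t ^ (2 * j))
      = (real n - 2 * real j) * deriv_coeff n j * (s ^ (Suc n - 2 * Suc j) * t ^ (2 * Suc j))"
    unfolding deriv_coeff_mult_of_nat_diff by (simp add: power2_eq_square ac_simps)
qed simp

lemma P_Suc_eq: "P (Suc n) s t = (s\<^sup>2 + t\<^sup>2) * P_deriv n s t - (2 * real n + 1) * s * P n s t"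
proof -
  let ?c = "deriv_coeff n"
  define X where "X j = s ^ (Suc n - 2 * j) * t ^ (2 * j)" for j
  have "P (Suc n) s t = (\<Sum>j\<le>Suc n. deriv_coeff (Suc n) j * X j)"
    unfolding P_eq_deriv_coeff_sum X_def by (simp add: mult.assoc)
  also have "\<dots> = - (real n + 1) * ?c 0 * X 0
      + (\<Sum>j\<le>n. (- (real n + 2 * real (Suc j) + 1) * ?c (Suc j)
                     + (real n - 2 * real j) * ?c j) * X (Suc j))"
    unfolding sum.atMost_Suc_shift by (simp add: deriv_coeff_0 deriv_coeff_Suc_Suc algebra_simps)
  also have "\<dots> = (\<Sum>j\<le>Suc n. - (real n + 2 * real j + 1) * ?c j * X j)
      + t\<^sup>2 * P_deriv n s t"
    unfolding t_squared_mult_P_deriv X_def sum.atMost_Suc_shift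
    by (simp add: algebra_simps flip: sum.distrib)
  also have "(\<Sum>j\<le>Suc n. - (real n + 2 * real j + 1) * ?c j * X j)
      = s\<^sup>2 * P_deriv n s t - (2 * real n + 1) * (s * P n s t)"
    unfolding s_squared_mult_P_deriv s_mult_P X_def
    by (simp add: deriv_coeff_eq_0 sum_distrib_left flip: sum_subtractf)
       (rule sum.cong; simp add: algebra_simps)
  finally show ?thesis
    by (simp add: algebra_simps)
qed

lemma P_div_norm_power_has_derivative:
  assumes "s\<^sup>2 + t\<^sup>2 > 0"
  shows "((\<lambda>x. P n x t / sqrt (x\<^sup>2 + t\<^sup>2) ^ (2 * n + 1)) has_real_derivative
           P (Suc n) s t / sqrt (s\<^sup>2 + t\<^sup>2) ^ (2 * Suc n + 1)) (at s)"
proof -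
  define r where "r = sqrt (s\<^sup>2 + t\<^sup>2)"
  have r: "r > 0" "r\<^sup>2 = s\<^sup>2 + t\<^sup>2"
    using assms by (simp_all add: r_def)
  have "((\<lambda>x. sqrt (x\<^sup>2 + t\<^sup>2)) has_real_derivative s / r) (at s)"
    using assms unfolding r_def by (auto intro!: derivative_eq_intros simp: divide_simps)
  from DERIV_power[OF this, of "2 * n + 1"]
  have "((\<lambda>x. sqrt (x\<^sup>2 + t\<^sup>2) ^ (2 * n + 1)) has_real_derivative
      real (2 * n + 1) * (s / r * r ^ (2 * n))) (at s)"
    by (simp add: r_def)
  moreover have "sqrt (s\<^sup>2 + t\<^sup>2) ^ (2 * n + 1) \<noteq> 0"
    unfolding r_def[symmetric] using r by simp
  ultimately have "((\<lambda>x. P n x t / sqrt (x\<^sup>2 + t\<^sup>2) ^ (2 * n + 1)) has_real_derivative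
      (P_deriv n s t * r ^ (2 * n + 1) - P n s t * (real (2 * n + 1) * (s / r * r ^ (2 * n))))
        / (r ^ (2 * n + 1) * r ^ (2 * n + 1))) (at s)"
    unfolding r_def by (rule DERIV_divide[OF P_has_real_derivative])
  moreover have "(P_deriv n s t * r ^ (2 * n + 1) - P n s t * (real (2 * n + 1) * (s / r * r ^ (2 * n))))
        / (r ^ (2 * n + 1) * r ^ (2 * n + 1)) = P (Suc n) s t / r ^ (2 * Suc n + 1)"
    using r unfolding P_Suc_eq r(2)[symmetric] by (simp add: field_simps power2_eq_square)
  ultimately show ?thesis
    by (simp add: r_def)
qed

lemma higher_deriv_inverse_norm:
  assumes "s\<^sup>2 + t\<^sup>2 > 0"
  shows "(deriv ^^ n) (\<lambda>x. 1 / sqrt (x\<^sup>2 + t\<^sup>2)) s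
    = P n s t / sqrt (s\<^sup>2 + t\<^sup>2) ^ (2 * n + 1)"
  using assms
proof (induction n arbitrary: s)
  case 0
  then show ?case
    by (simp add: P_eq_deriv_coeff_sum deriv_coeff_0)
next
  case (Suc n)
  have "((deriv ^^ n) (\<lambda>x. 1 / sqrt (x\<^sup>2 + t\<^sup>2)) has_real_derivative
      P (Suc n) s t / sqrt (s\<^sup>2 + t\<^sup>2) ^ (2 * Suc n + 1)) (at s)"
  proof (rule has_field_derivative_transform_within_open)
    show "open {x. x\<^sup>2 + t\<^sup>2 > (0::real)}"
      by (intro open_Collect_less continuous_intros)
  qed (use Suc P_div_norm_power_has_derivative in auto)
  then show ?case
    by (simp add: DERIV_imp_deriv)
qed

definition fib_poly :: "nat \<Rightarrow> real \<Rightarrow> real" where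
  "fib_poly n x = (\<Sum>j\<le>n. real ((n - j) choose j) * x ^ j)"

lemma fib_poly_Suc_Suc: "fib_poly (Suc (Suc n)) x = fib_poly (Suc n) x + x * fib_poly n x"
proof -
  have "fib_poly (Suc (Suc n)) x = 1 + (\<Sum>j\<le>Suc n. real ((Suc n - j) choose Suc j) * x ^ Suc j)"
    unfolding fib_poly_def sum.atMost_Suc_shift by simp
  also have "(\<Sum>j\<le>Suc n. real ((Suc n - j) choose Suc j) * x ^ Suc j)
      = (\<Sum>j\<le>n. x * (real ((n - j) choose j) * x ^ j) + real ((n - j) choose Suc j) * x ^ Suc j)"
    by (auto intro!: sum.cong simp: Suc_diff_le algebra_simps)
  also have "1 + \<dots> = fib_poly (Suc n) x + x * fib_poly n x"
    unfolding fib_poly_def sum.atMost_Suc_shift[of _ n] sum.distrib sum_distrib_left by simp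
  finally show ?thesis .
qed

lemma fib_poly_shift:
  "(\<Sum>j\<le>Suc (Suc k) div 2. if j = 0 then 0 else real ((Suc k - j) choose (j - 1)) * x ^ j)
     = x * fib_poly k x"
proof -
  have half: "Suc (Suc k) div 2 = Suc (k div 2)"
    by simp
  have "(\<Sum>j\<le>Suc (Suc k) div 2. if j = 0 then 0 else real ((Suc k - j) choose (j - 1)) * x ^ j)
      = x * (\<Sum>j\<le>k div 2. real ((k - j) choose j) * x ^ j)"
    unfolding half sum.atMost_Suc_shift by (simp add: sum_distrib_left mult_ac)
  also have "(\<Sum>j\<le>k div 2. real ((k - j) choose j) * x ^ j) = fib_poly k x"
    unfolding fib_poly_def by (rule sum_atMost_half) auto
  finally show ?thesis .
qed

lemma fib_poly_minus_quarter: "fib_poly n (-1/4) = (real n + 1) / 2 ^ n"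
proof (induction n rule: induct_nat_012)
  case (ge2 n)
  then show ?case
    by (simp add: fib_poly_Suc_Suc field_simps)
qed (simp_all add: fib_poly_def)

lemma deriv_coeff_div_choose:
  assumes "2 * j \<le> n"
  shows "deriv_coeff n j / real (n choose j) = (-1) ^ n * fact n * (real ((n - j) choose j) * (-1/4) ^ j)"
proof -
  have C: "real (n choose j) = fact n / (fact j * fact (n - j))"
    "real ((n - j) choose j) = fact (n - j) / (fact j * fact (n - 2 * j))"
    using assms binomial_fact[of j "n - j", where 'a = real]
    by (simp_all add: binomial_fact flip: mult_2)
  have q: "(-1/4 :: real) ^ j = (-1) ^ j / 4 ^ j"
    by (rule power_divide)
  show ?thesis
    unfolding deriv_coeff_def C q using assms by (simp add: power_add power2_eq_square mult_ac)
qed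

lemma deriv_coeff_div_choose_pred:
  assumes "2 * j \<le> n" "0 < j"
  shows "deriv_coeff n j / real ((n - 1) choose j)
    = deriv_coeff n j / real (n choose j)
      + (-1) ^ n * fact n * (real ((n - 1 - j) choose (j - 1)) * (-1/4) ^ j)"
proof -
  define K b b' where "K = (-1) ^ n * fact n * (-1/4 :: real) ^ j"
    and "b = real ((n - j) choose j)" and "b' = real ((n - 1 - j) choose (j - 1))"
  have nz: "real (n choose j) \<noteq> 0" "real n - real j \<noteq> 0" "real n \<noteq> 0"
    using assms by auto
  have "real (n - j) * real (n choose j) = real n * real ((n - 1) choose j)"
    using binomial_absorb_comp[of n j] by (metis of_nat_mult)
  then have C: "real ((n - 1) choose j) = (real n - real j) * real (n choose j) / real n"
    using assms nz by (simp add: field_simps)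
  have "real j * b = real (n - j) * b'"
    using times_binomial_minus1_eq[of j "n - j"] assms unfolding b_def b'_def
    by (metis diff_commute of_nat_mult)
  then have "real j * b = (real n - real j) * b'"
    using assms by simp
  then have B: "K * b * real j = K * b' * (real n - real j)"
    by (metis mult.assoc mult.commute)
  have "deriv_coeff n j / real ((n - 1) choose j) = K * b * real n / (real n - real j)"
    using deriv_coeff_div_choose[OF assms(1)] nz unfolding C K_def b_def by (simp add: field_simps)
  also have "\<dots> = K * b + K * b'"
    using nz B by (simp add: field_simps)
  finally show ?thesis
    using deriv_coeff_div_choose[OF assms(1)] unfolding K_def b_def b'_def by (simp add: ac_simps)
qed

lemma sum_deriv_coeff_div_choose:
  "(\<Sum>j\<le>n div 2. deriv_coeff n j / real (n choose j)) = (-1) ^ n * fact (Suc n) / 2 ^ n"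
proof -
  have "(\<Sum>j\<le>n div 2. deriv_coeff n j / real (n choose j))
      = (-1) ^ n * fact n * (\<Sum>j\<le>n div 2. real ((n - j) choose j) * (-1/4) ^ j)"
    unfolding sum_distrib_left by (rule sum.cong) (auto simp: deriv_coeff_div_choose)
  also have "(\<Sum>j\<le>n div 2. real ((n - j) choose j) * (-1/4) ^ j) = fib_poly n (-1/4)"
    unfolding fib_poly_def by (rule sum_atMost_half) simp
  also have "(-1) ^ n * fact n * fib_poly n (-1/4) = (-1) ^ n * fact (Suc n) / 2 ^ n"
    unfolding fib_poly_minus_quarter by (simp add: algebra_simps)
  finally show ?thesis .
qed

lemma sum_deriv_coeff_div_choose_pred:
  assumes "1 \<le> n"
  shows "(\<Sum>j\<le>n div 2. deriv_coeff n j / real ((n - 1) choose j)) = (-1) ^ n * fact n / 2 ^ (n - 1)"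
proof (cases "n = 1")
  case True
  then show ?thesis
    by (simp add: deriv_coeff_0)
next
  case False
  with assms have "2 \<le> n"
    by simp
  then obtain k where n: "n = Suc (Suc k)"
    by (metis add_2_eq_Suc le_Suc_ex)
  have "(\<Sum>j\<le>n div 2. deriv_coeff n j / real ((n - 1) choose j))
      = (\<Sum>j\<le>n div 2. deriv_coeff n j / real (n choose j))
        + (-1) ^ n * fact n * (\<Sum>j\<le>n div 2. if j = 0 then 0
            else real ((n - 1 - j) choose (j - 1)) * (-1/4) ^ j)"
    unfolding sum_distrib_left sum.distrib[symmetric]
  proof (rule sum.cong)
    fix j assume "j \<in> {..n div 2}"
    then have "2 * j \<le> n" by auto
    then show "deriv_coeff n j / real ((n - 1) choose j) = deriv_coeff n j / real (n choose j)
        + (-1) ^ n * fact n * (if j = 0 then 0 else real ((n - 1 - j) choose (j - 1)) * (-1/4) ^ j)"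
      using deriv_coeff_div_choose_pred[of j n] by (cases "j = 0") auto
  qed simp
  also have "(\<Sum>j\<le>n div 2. if j = 0 then 0 else real ((n - 1 - j) choose (j - 1)) * (-1/4) ^ j)
      = -1/4 * fib_poly k (-1/4)"
    unfolding n diff_Suc_1 by (rule fib_poly_shift)
  also have "(\<Sum>j\<le>n div 2. deriv_coeff n j / real (n choose j))
        + (-1) ^ n * fact n * (-1/4 * fib_poly k (-1/4))
      = (-1) ^ n * fact n * ((real n + 1) / 2 ^ n - (real k + 1) / (4 * 2 ^ k))"
    unfolding sum_deriv_coeff_div_choose fib_poly_minus_quarter by (simp add: algebra_simps)
  also have "\<dots> = (-1) ^ n * fact n / 2 ^ (n - 1)"
    by (simp add: n field_simps)
  finally show ?thesis .
qed

lemma sum_a_even_div_eq: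
  "(\<Sum>i=0..m. a_even m i / g (m - i)) = (\<Sum>j\<le>2 * m div 2. deriv_coeff (2 * m) j / g j)"
  unfolding sum_reflect by (auto intro!: sum.cong simp: a_even_eq_deriv_coeff)

lemma sum_a_odd_div_eq:
  "(\<Sum>i=0..m. a_odd m i / g (m - i)) = (\<Sum>j\<le>(2 * m + 1) div 2. deriv_coeff (2 * m + 1) j / g j)"
  unfolding sum_reflect by (auto intro!: sum.cong simp: a_odd_eq_deriv_coeff)

lemma sum_a_even_div_choose:
  "(\<Sum>i=0..m. a_even m i / real ((2 * m) choose (m - i))) = fact (2 * m + 1) / 2 ^ (2 * m)"
  unfolding sum_a_even_div_eq[where g = "\<lambda>j. real ((2 * m) choose j)"]
  using sum_deriv_coeff_div_choose[of "2 * m"] by simp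

lemma sum_a_even_div_choose_pred:
  "1 \<le> m \<Longrightarrow>
    (\<Sum>i=0..m. a_even m i / real ((2 * m - 1) choose (m - i))) = fact (2 * m) / 2 ^ (2 * m - 1)"
  unfolding sum_a_even_div_eq[where g = "\<lambda>j. real ((2 * m - 1) choose j)"]
  using sum_deriv_coeff_div_choose_pred[of "2 * m"] by simp

lemma sum_a_odd_div_choose:
  "(\<Sum>i=0..m. a_odd m i / real ((2 * m + 1) choose (m - i))) = - fact (2 * m + 2) / 2 ^ (2 * m + 1)"
  unfolding sum_a_odd_div_eq[where g = "\<lambda>j. real ((2 * m + 1) choose j)"]
  using sum_deriv_coeff_div_choose[of "2 * m + 1"] by simp

lemma sum_a_odd_div_choose_pred:
  "(\<Sum>i=0..m. a_odd m i / real ((2 * m) choose (m - i))) = - fact (2 * m + 1) / 2 ^ (2 * m)"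
  unfolding sum_a_odd_div_eq[where g = "\<lambda>j. real ((2 * m) choose j)"]
  using sum_deriv_coeff_div_choose_pred[of "2 * m + 1"] by simp

lemma coefficient_sum_identities:
  assumes "1 \<le> m"
  shows "((\<Sum>i = 0..m. a_even m i / real ((2 * m - 1) choose (m - i)))
         = - (2 / (2 * real m + 1)) * (\<Sum>i = 0..m. a_odd m i / real ((2 * m) choose (m - i))))
    \<and> (- (2 / (2 * real m + 1)) * (\<Sum>i = 0..m. a_odd m i / real ((2 * m) choose (m - i)))
         = fact (2 * m) / 2 ^ (2 * m - 1))
    \<and> ((real m + 1) * (\<Sum>i = 0..m. a_even m i / real ((2 * m) choose (m - i)))
         = - (\<Sum>i = 0..m. a_odd m i / real ((2 * m + 1) choose (m - i))))
    \<and> (- (\<Sum>i = 0..m. a_odd m i / real ((2 * m + 1) choose (m - i)))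
         = fact (2 * m + 2) / 2 ^ (2 * m + 1))"
proof -
  from assms have "(2::real) ^ (2 * m) = 2 * 2 ^ (2 * m - 1)"
    by (simp flip: power_Suc)
  moreover have "2 * real m + 1 \<noteq> 0"
    by linarith
  ultimately show ?thesis
    unfolding sum_a_even_div_choose_pred[OF assms] sum_a_odd_div_choose_pred sum_a_even_div_choose
      sum_a_odd_div_choose
    by (simp add: divide_simps)
qed

theorem lemma2p3:
  shows "(\<forall>(m::nat) (s::real) (t::real). (s, t) \<noteq> (0, 0) \<longrightarrow>
            (deriv ^^ m) (\<lambda>x. 1 / sqrt (x\<^sup>2 + t\<^sup>2)) s
              = P m s t / (sqrt (s\<^sup>2 + t\<^sup>2)) ^ (2 * m + 1))
       \<and> (\<forall>m::nat. m \<ge> 1 \<longrightarrow>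
            (\<Sum>i = 0..m. a_even m i / real ((2 * m - 1) choose (m - i)))
              = - (2 / (2 * real m + 1)) * (\<Sum>i = 0..m. a_odd m i / real ((2 * m) choose (m - i)))
          \<and> - (2 / (2 * real m + 1)) * (\<Sum>i = 0..m. a_odd m i / real ((2 * m) choose (m - i)))
              = fact (2 * m) / 2 ^ (2 * m - 1)
          \<and> (real m + 1) * (\<Sum>i = 0..m. a_even m i / real ((2 * m) choose (m - i)))
              = - (\<Sum>i = 0..m. a_odd m i / real ((2 * m + 1) choose (m - i)))
          \<and> - (\<Sum>i = 0..m. a_odd m i / real ((2 * m + 1) choose (m - i)))
              = fact (2 * m + 2) / 2 ^ (2 * m + 1))"
  using higher_deriv_inverse_norm coefficient_sum_identities
  by (auto simp: sum_power2_gt_zero_iff)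

end
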